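(* Let $\mathbb H^1$ be the first Heisenberg group equipped with a homogeneous distance. Then the topological group $\ell_1(\mathbb H^1)=\{(x_n)_n:x_n\in\mathbb H^1,\ \sum_nd(x_n,e)<\infty\}$, with componentwise multiplication and distance $\sum_nd(x_n,y_n)$, is not a Banach Lie group.
   Context: A homogeneous distance on $\mathbb H^1$ is a left-invariant distance inducing the manifold topology with $d(\delta_tp,\delta_tq)=|t|d(p,q)$ for the Carnot dilations $\delta_t$ of $\mathbb H^1$. *)

theory Defs
  imports "HOL-Analysis.Analysis"
begin

section \<open>The first Heisenberg group H^1 in exponential coordinates\<close>

type_synonym heis = "real \<times> real \<times> real"

definition heis_mult :: "heis \<Rightarrow> heis \<Rightarrow> heis" where
  "heis_mult p q = (case p of (x, y, t) \<Rightarrow> case q of (x', y', t') \<Rightarrow>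
      (x + x', y + y', t + t' + (x * y' - y * x') / 2))"

definition heis_inv :: "heis \<Rightarrow> heis" where
  "heis_inv p = (case p of (x, y, t) \<Rightarrow> (- x, - y, - t))"

definition heis_one :: heis where
  "heis_one = (0, 0, 0)"

definition heis_dil :: "real \<Rightarrow> heis \<Rightarrow> heis" where
  "heis_dil s p = (case p of (x, y, t) \<Rightarrow> (s * x, s * y, s\<^sup>2 * t))"

definition homogeneous_distance :: "(heis \<Rightarrow> heis \<Rightarrow> real) \<Rightarrow> bool" where
  "homogeneous_distance d \<longleftrightarrow>
     (\<forall>p q. d p q = 0 \<longleftrightarrow> p = q) \<and>
     (\<forall>p q. d p q = d q p) \<and>
     (\<forall>p q r. d p r \<le> d p q + d q r) \<and>
     (\<forall>g p q. d (heis_mult g p) (heis_mult g q) = d p q) \<and>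
     (\<forall>S. open S \<longleftrightarrow> (\<forall>p\<in>S. \<exists>r>0. \<forall>q. d p q < r \<longrightarrow> q \<in> S)) \<and>
     (\<forall>s p q. d (heis_dil s p) (heis_dil s q) = \<bar>s\<bar> * d p q)"

definition ell1 :: "(heis \<Rightarrow> heis \<Rightarrow> real) \<Rightarrow> (nat \<Rightarrow> heis) set" where
  "ell1 d = {x. summable (\<lambda>n. d (x n) heis_one)}"

definition ell1_dist :: "(heis \<Rightarrow> heis \<Rightarrow> real) \<Rightarrow> (nat \<Rightarrow> heis) \<Rightarrow> (nat \<Rightarrow> heis) \<Rightarrow> real" where
  "ell1_dist d x y = (\<Sum>n. d (x n) (y n))"

definition ell1_mult :: "(nat \<Rightarrow> heis) \<Rightarrow> (nat \<Rightarrow> heis) \<Rightarrow> (nat \<Rightarrow> heis)" where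
  "ell1_mult x y = (\<lambda>n. heis_mult (x n) (y n))"

definition ell1_inv :: "(nat \<Rightarrow> heis) \<Rightarrow> (nat \<Rightarrow> heis)" where
  "ell1_inv x = (\<lambda>n. heis_inv (x n))"

definition ell1_topology :: "(heis \<Rightarrow> heis \<Rightarrow> real) \<Rightarrow> (nat \<Rightarrow> heis) topology" where
  "ell1_topology d = topology (\<lambda>V. V \<subseteq> ell1 d \<and>
      (\<forall>x\<in>V. \<exists>r>0. \<forall>y\<in>ell1 d. ell1_dist d x y < r \<longrightarrow> y \<in> V))"

text \<open>D k x is the k-th Frechet derivative at x, seen as a k-linear map acting on the
  first k entries of h; it is required to be the derivative of D (k-1), and
  x \<mapsto> D k x is continuous in the operator norm (sup over the unit ball).\<close>
definition smooth_on :: "'a::real_normed_vector set \<Rightarrow> ('a \<Rightarrow> 'b::real_normed_vector) \<Rightarrow> bool" where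
  "smooth_on U f \<longleftrightarrow> open U \<and>
    (\<exists>D :: nat \<Rightarrow> 'a \<Rightarrow> (nat \<Rightarrow> 'a) \<Rightarrow> 'b.
      (\<forall>x\<in>U. \<forall>h. D 0 x h = f x) \<and>
      (\<forall>k. \<forall>x\<in>U. \<forall>h h'. (\<forall>i<k. h i = h' i) \<longrightarrow> D k x h = D k x h') \<and>
      (\<forall>k. \<forall>x\<in>U. \<forall>h. ((\<lambda>y. D k y h) has_derivative (\<lambda>v. D (Suc k) x (h(k := v)))) (at x)) \<and>
      (\<forall>k. \<forall>x\<in>U. \<forall>e>0. \<exists>\<delta>>0. \<forall>y\<in>U. dist y x < \<delta> \<longrightarrow>
          (\<forall>h. (\<forall>i<k. norm (h i) \<le> 1) \<longrightarrow> norm (D k y h - D k x h) \<le> e)))"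

definition banach_lie_group :: "'g topology \<Rightarrow> ('g \<Rightarrow> 'g \<Rightarrow> 'g) \<Rightarrow> ('g \<Rightarrow> 'g) \<Rightarrow> 'e::banach itself \<Rightarrow> bool" where
  "banach_lie_group T m i _ \<longleftrightarrow>
    (\<exists>A :: ('g set \<times> ('g \<Rightarrow> 'e)) set.
      (\<forall>(U, \<phi>)\<in>A. openin T U \<and> open (\<phi> ` U) \<and>
          homeomorphic_map (subtopology T U) (top_of_set (\<phi> ` U)) \<phi>) \<and>
      topspace T \<subseteq> \<Union>(fst ` A) \<and>
      (\<forall>(U, \<phi>)\<in>A. \<forall>(V, \<psi>)\<in>A. smooth_on (\<phi> ` (U \<inter> V)) (\<psi> \<circ> inv_into U \<phi>)) \<and>
      (\<forall>(U, \<phi>)\<in>A. \<forall>(V, \<psi>)\<in>A. \<forall>(W, \<theta>)\<in>A.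
         smooth_on {p \<in> \<phi> ` U \<times> \<psi> ` V. m (inv_into U \<phi> (fst p)) (inv_into V \<psi> (snd p)) \<in> W}
           (\<lambda>p. \<theta> (m (inv_into U \<phi> (fst p)) (inv_into V \<psi> (snd p))))) \<and>
      (\<forall>(U, \<phi>)\<in>A. \<forall>(V, \<psi>)\<in>A.
         smooth_on {a \<in> \<phi> ` U. i (inv_into U \<phi> a) \<in> V} (\<lambda>a. \<psi> (i (inv_into U \<phi> a)))))"

end

theory Submission
  imports Defs
begin

(*
  Suppose \<ell>\<^sub>1(\<bbbH>\<^sup>1) were a Banach Lie group, with a chart \<phi> at the unit e. Read through \<phi>,
  multiplication is C\<^sup>1 with derivative (a, b) \<mapsto> a + b at (\<phi> e, \<phi> e), so near \<phi> e it is
  additive up to an error \<epsilon>(|a| + |b|). Hence squaring almost doubles the distance to \<phi> e,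
  and a commutator is much closer to \<phi> e than its factors.

  In \<bbbH>\<^sup>1 the central element (0, 0, \<delta>\<^sup>2/4\<^sup>j) is the commutator of (\<delta>, 0, 0) and (0, \<delta>/4\<^sup>j, 0),
  and the latter is a 4\<^sup>j-th root of (0, \<delta>, 0); placed in one coordinate of \<ell>\<^sub>1, its chart
  image is therefore within O((4/7)\<^sup>2\<^sup>j) of \<phi> e. The product of 2\<^sup>j such elements in distinct
  coordinates has chart image within O((32/49)\<^sup>j) of \<phi> e, while by homogeneity its
  \<ell>\<^sub>1-distance from e is 2\<^sup>j (\<delta>/2\<^sup>j) d(e, (0, 0, 1)), independent of j. So \<phi>\<^sup>-\<^sup>1 is not
  continuous at \<phi> e.
*)

section \<open>Multiplication in a chart at the identity\<close>

lemma onorm_le_unit_sphere: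
  fixes f :: "'a::real_normed_vector \<Rightarrow> 'b::real_normed_vector"
  assumes "linear f" "0 \<le> e" "\<And>v. norm v = 1 \<Longrightarrow> norm (f v) \<le> e"
  shows "onorm f \<le> e"
proof (rule onorm_bound[OF assms(2)])
  fix v :: 'a
  show "norm (f v) \<le> e * norm v"
  proof (cases "v = 0")
    case True
    then show ?thesis using linear_0[OF assms(1)] by simp
  next
    case False
    have "f v = f (norm v *\<^sub>R (v /\<^sub>R norm v))"
      using False by simp
    also have "\<dots> = norm v *\<^sub>R f (v /\<^sub>R norm v)"
      by (rule linear_scale[OF assms(1)])
    finally have "norm (f v) = norm v * norm (f (v /\<^sub>R norm v))"
      by simp
    moreover have "norm (f (v /\<^sub>R norm v)) \<le> e"
      using assms(3) False by simp
    ultimately show ?thesis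
      by (metis mult.commute mult_left_mono norm_ge_zero)
  qed
qed

lemma smooth_on_imp_C1:
  fixes f :: "'a::real_normed_vector \<Rightarrow> 'b::real_normed_vector"
  assumes "smooth_on \<Omega> f"
  obtains f' where "\<And>x. x \<in> \<Omega> \<Longrightarrow> (f has_derivative f' x) (at x)"
    and "\<And>x e. x \<in> \<Omega> \<Longrightarrow> e > 0 \<Longrightarrow> \<exists>\<delta>>0. \<forall>y\<in>\<Omega>. dist y x < \<delta> \<longrightarrow> onorm (f' y - f' x) \<le> e"
proof -
  obtain D :: "nat \<Rightarrow> 'a \<Rightarrow> (nat \<Rightarrow> 'a) \<Rightarrow> 'b" where
    "open \<Omega>" and D0: "\<forall>x\<in>\<Omega>. \<forall>h. D 0 x h = f x"
    and D_deriv: "\<forall>k. \<forall>x\<in>\<Omega>. \<forall>h. ((\<lambda>y. D k y h) has_derivative (\<lambda>v. D (Suc k) x (h(k := v)))) (at x)"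
    and D_cont: "\<forall>k. \<forall>x\<in>\<Omega>. \<forall>e>0. \<exists>\<delta>>0. \<forall>y\<in>\<Omega>. dist y x < \<delta> \<longrightarrow>
          (\<forall>h. (\<forall>i<k. norm (h i) \<le> 1) \<longrightarrow> norm (D k y h - D k x h) \<le> e)"
    using assms unfolding smooth_on_def by blast
  define f' where "f' x v = D 1 x ((\<lambda>_. 0)(0 := v))" for x v
  have deriv: "(f has_derivative f' x) (at x)" if "x \<in> \<Omega>" for x
  proof -
    have "((\<lambda>y. D 0 y (\<lambda>_. 0)) has_derivative f' x) (at x)"
      using D_deriv that unfolding f'_def One_nat_def by blast
    then show ?thesis
      by (rule has_derivative_transform_within_open[OF _ \<open>open \<Omega>\<close> that]) (use D0 in auto)
  qed
  moreover have "\<exists>\<delta>>0. \<forall>y\<in>\<Omega>. dist y x < \<delta> \<longrightarrow> onorm (f' y - f' x) \<le> e"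
    if x: "x \<in> \<Omega>" and "e > 0" for x e
  proof -
    obtain \<delta> where "\<delta> > 0" and \<delta>: "\<forall>y\<in>\<Omega>. dist y x < \<delta> \<longrightarrow>
        (\<forall>h. (\<forall>i<1. norm (h i) \<le> 1) \<longrightarrow> norm (D 1 y h - D 1 x h) \<le> e)"
      using D_cont x \<open>e > 0\<close> by blast
    have "onorm (f' y - f' x) \<le> e" if "y \<in> \<Omega>" "dist y x < \<delta>" for y
    proof (rule onorm_le_unit_sphere)
      show "linear (f' y - f' x)"
        using has_derivative_linear[OF deriv[OF \<open>y \<in> \<Omega>\<close>]] has_derivative_linear[OF deriv[OF x]]
        by (simp add: fun_diff_def linear_compose_sub)
      show "norm ((f' y - f' x) v) \<le> e" if "norm v = 1" for v
        using \<delta> \<open>y \<in> \<Omega>\<close> \<open>dist y x < \<delta>\<close> that by (simp add: f'_def)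
    qed (use \<open>e > 0\<close> in simp)
    with \<open>\<delta> > 0\<close> show ?thesis by blast
  qed
  ultimately show ?thesis using that by blast
qed

lemma C1_imp_strict_derivative:
  fixes f :: "'a::real_normed_vector \<Rightarrow> 'b::real_normed_vector"
  assumes "open \<Omega>" "x0 \<in> \<Omega>" and deriv: "\<And>x. x \<in> \<Omega> \<Longrightarrow> (f has_derivative f' x) (at x)"
    and cont: "\<exists>\<delta>>0. \<forall>y\<in>\<Omega>. dist y x0 < \<delta> \<longrightarrow> onorm (f' y - f' x0) \<le> \<epsilon>"
  shows "\<exists>r>0. ball x0 r \<subseteq> \<Omega> \<and>
    (\<forall>a\<in>ball x0 r. \<forall>b\<in>ball x0 r. norm (f b - f a - f' x0 (b - a)) \<le> \<epsilon> * norm (b - a))"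
proof -
  obtain \<delta> where "\<delta> > 0" and \<delta>: "\<And>y. y \<in> \<Omega> \<Longrightarrow> dist y x0 < \<delta> \<Longrightarrow> onorm (f' y - f' x0) \<le> \<epsilon>"
    using cont by blast
  obtain r0 where "r0 > 0" "ball x0 r0 \<subseteq> \<Omega>"
    using assms(1,2) open_contains_ball by blast
  define r where "r = min r0 \<delta>"
  have "r > 0" "ball x0 r \<subseteq> \<Omega>"
    using \<open>r0 > 0\<close> \<open>\<delta> > 0\<close> \<open>ball x0 r0 \<subseteq> \<Omega>\<close> by (auto simp: r_def)
  moreover have "norm (f b - f a - f' x0 (b - a)) \<le> \<epsilon> * norm (b - a)"
    if "a \<in> ball x0 r" "b \<in> ball x0 r" for a b
  proof -
    have "norm (f b - f a - f' x0 (b - a)) \<le> norm (b - a) * \<epsilon>"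
    proof (rule differentiable_bound_linearization[where S = "ball x0 r"])
      show "a + t *\<^sub>R (b - a) \<in> ball x0 r" if "t \<in> {0..1}" for t
        using convexD_alt[OF convex_ball \<open>a \<in> ball x0 r\<close> \<open>b \<in> ball x0 r\<close>, of t] that
        by (simp add: algebra_simps)
      show "(f has_derivative f' x) (at x within ball x0 r)" if "x \<in> ball x0 r" for x
        using deriv that \<open>ball x0 r \<subseteq> \<Omega>\<close> by (blast intro: has_derivative_at_withinI)
      show "onorm (f' x - f' x0) \<le> \<epsilon>" if "x \<in> ball x0 r" for x
        using \<delta> that \<open>ball x0 r \<subseteq> \<Omega>\<close> by (auto simp: r_def dist_commute)
    qed (use \<open>r > 0\<close> in simp)
    then show ?thesis by (simp add: mult.commute)
  qed
  ultimately show ?thesis by blast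
qed

lemma unital_has_derivative_eq_add:
  fixes \<mu> :: "'a::real_normed_vector \<times> 'a \<Rightarrow> 'a"
  assumes "(\<mu> has_derivative L) (at (p, p))" and "open S" "p \<in> S"
    and "\<And>u. u \<in> S \<Longrightarrow> \<mu> (u, p) = u" "\<And>u. u \<in> S \<Longrightarrow> \<mu> (p, u) = u"
  shows "L (a, b) = a + b"
proof -
  have "((\<lambda>u. (u, p)) has_derivative (\<lambda>a. (a, 0))) (at p)"
    by (auto intro!: derivative_eq_intros)
  from has_derivative_compose[OF this, of \<mu> L]
  have "((\<lambda>u. \<mu> (u, p)) has_derivative (\<lambda>a. L (a, 0))) (at p)"
    using assms(1) by simp
  then have "(id has_derivative (\<lambda>a. L (a, 0))) (at p)"
    by (rule has_derivative_transform_within_open[OF _ assms(2,3)]) (simp add: assms(4))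
  then have "(\<lambda>a. L (a, 0)) = id"
    by (rule has_derivative_unique[OF _ has_derivative_id])
  then have left: "L (a, 0) = a"
    by (simp add: fun_eq_iff)
  have "((\<lambda>u. (p, u)) has_derivative (\<lambda>b. (0, b))) (at p)"
    by (auto intro!: derivative_eq_intros)
  from has_derivative_compose[OF this, of \<mu> L]
  have "((\<lambda>u. \<mu> (p, u)) has_derivative (\<lambda>b. L (0, b))) (at p)"
    using assms(1) by simp
  then have "(id has_derivative (\<lambda>b. L (0, b))) (at p)"
    by (rule has_derivative_transform_within_open[OF _ assms(2,3)]) (simp add: assms(5))
  then have "(\<lambda>b. L (0, b)) = id"
    by (rule has_derivative_unique[OF _ has_derivative_id])
  then have right: "L (0, b) = b"
    by (simp add: fun_eq_iff)
  have "L ((a, 0) + (0, b)) = L (a, 0) + L (0, b)"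
    using linear_add[OF has_derivative_linear[OF assms(1)]] .
  then show ?thesis by (simp add: left right)
qed

locale near_additive =
  fixes \<mu> :: "'a::real_normed_vector \<times> 'a \<Rightarrow> 'a" and p :: 'a and r \<epsilon> :: real
  assumes unit_left: "norm (u - p) < r \<Longrightarrow> \<mu> (p, u) = u"
    and unit_right: "norm (u - p) < r \<Longrightarrow> \<mu> (u, p) = u"
    and near_add: "\<lbrakk>norm (u - p) < r; norm (v - p) < r; norm (u' - p) < r; norm (v' - p) < r\<rbrakk> \<Longrightarrow>
      norm (\<mu> (u, v) - \<mu> (u', v') - ((u - u') + (v - v'))) \<le> \<epsilon> * (norm (u - u') + norm (v - v'))"
begin

lemma radius_pos: "norm (u - p) < r \<Longrightarrow> 0 < r"
  using norm_ge_zero[of "u - p"] by linarith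

lemma product_bound:
  assumes "norm (u - p) < r" "norm (v - p) < r"
  shows "norm (\<mu> (u, v) - p) \<le> norm (u - p) + (1 + \<epsilon>) * norm (v - p)"
proof -
  have "norm (\<mu> (u, v) - \<mu> (u, p) - ((u - u) + (v - p))) \<le> \<epsilon> * (norm (u - u) + norm (v - p))"
    by (rule near_add) (use assms radius_pos[OF assms(1)] in auto)
  then have "norm (\<mu> (u, v) - u - (v - p)) \<le> \<epsilon> * norm (v - p)"
    using unit_right[OF assms(1)] by simp
  moreover have "norm (\<mu> (u, v) - p) \<le> norm (u - p) + norm (v - p) + norm (\<mu> (u, v) - u - (v - p))"
    using norm_triangle_ineq[of "(u - p) + (v - p)" "\<mu> (u, v) - u - (v - p)"]
      norm_triangle_ineq[of "u - p" "v - p"] by (simp add: algebra_simps)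
  ultimately show ?thesis by (simp add: algebra_simps)
qed

lemma square_bound:
  assumes "norm (u - p) < r"
  shows "2 * (1 - \<epsilon>) * norm (u - p) \<le> norm (\<mu> (u, u) - p)"
proof -
  let ?w = "(u - p) + (u - p)"
  have "norm (\<mu> (u, u) - \<mu> (p, p) - ?w) \<le> \<epsilon> * (norm (u - p) + norm (u - p))"
    by (rule near_add) (use assms radius_pos[OF assms] in auto)
  moreover have "\<mu> (p, p) = p" using unit_left[of p] radius_pos[OF assms] by simp
  ultimately have err: "norm (\<mu> (u, u) - p - ?w) \<le> 2 * \<epsilon> * norm (u - p)" by simp
  have "(\<mu> (u, u) - p) - (\<mu> (u, u) - p - ?w) = 2 *\<^sub>R (u - p)"
    by (simp add: scaleR_2)
  then have "2 * norm (u - p) = norm ((\<mu> (u, u) - p) - (\<mu> (u, u) - p - ?w))"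
    by simp
  also have "\<dots> \<le> norm (\<mu> (u, u) - p) + norm (\<mu> (u, u) - p - ?w)"
    by (rule norm_triangle_ineq4)
  finally show ?thesis using err by (simp add: algebra_simps)
qed

lemma commutator_bound:
  assumes "norm (u - p) < r" "norm (v - p) < r" "norm (a - p) < r" "norm (\<mu> (v, u) - p) < r"
    and "\<mu> (a, \<mu> (v, u)) = \<mu> (u, v)"
  shows "(1 - \<epsilon>) * norm (a - p) \<le> 2 * \<epsilon> * norm (v - p)"
proof -
  let ?A = "\<mu> (u, v)" and ?B = "\<mu> (v, u)"
  have "norm (?A - \<mu> (u, p) - ((u - u) + (v - p))) \<le> \<epsilon> * (norm (u - u) + norm (v - p))"
    by (rule near_add) (use assms radius_pos[OF assms(1)] in auto)
  then have A: "norm (?A - u - (v - p)) \<le> \<epsilon> * norm (v - p)"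
    using unit_right[OF assms(1)] by simp
  have "norm (?B - \<mu> (p, u) - ((v - p) + (u - u))) \<le> \<epsilon> * (norm (v - p) + norm (u - u))"
    by (rule near_add) (use assms radius_pos[OF assms(1)] in auto)
  then have B: "norm (?B - u - (v - p)) \<le> \<epsilon> * norm (v - p)"
    using unit_left[OF assms(1)] by simp
  have "norm (?A - ?B) \<le> 2 * \<epsilon> * norm (v - p)"
    using norm_triangle_ineq4[of "?A - u - (v - p)" "?B - u - (v - p)"] A B by simp
  moreover have "norm (\<mu> (a, ?B) - \<mu> (p, ?B) - ((a - p) + (?B - ?B))) \<le> \<epsilon> * (norm (a - p) + norm (?B - ?B))"
    by (rule near_add) (use assms radius_pos[OF assms(1)] in auto)
  then have "norm (?A - ?B - (a - p)) \<le> \<epsilon> * norm (a - p)"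
    using unit_left[OF assms(4)] assms(5) by simp
  ultimately show ?thesis
    using norm_triangle_ineq4[of "?A - ?B" "?A - ?B - (a - p)"] by (simp add: algebra_simps)
qed

end

lemma smooth_unital_imp_near_additive:
  fixes \<mu> :: "'a::real_normed_vector \<times> 'a \<Rightarrow> 'a"
  assumes "smooth_on \<Omega> \<mu>" "(p, p) \<in> \<Omega>" and "open S" "p \<in> S"
    and unit: "\<And>u. u \<in> S \<Longrightarrow> \<mu> (u, p) = u" "\<And>u. u \<in> S \<Longrightarrow> \<mu> (p, u) = u"
    and "\<epsilon> > 0"
  shows "\<exists>r>0. near_additive \<mu> p r \<epsilon>"
proof -
  obtain \<mu>' where deriv: "\<And>x. x \<in> \<Omega> \<Longrightarrow> (\<mu> has_derivative \<mu>' x) (at x)"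
    and cont: "\<And>x e. x \<in> \<Omega> \<Longrightarrow> e > 0 \<Longrightarrow> \<exists>\<delta>>0. \<forall>y\<in>\<Omega>. dist y x < \<delta> \<longrightarrow> onorm (\<mu>' y - \<mu>' x) \<le> e"
    using smooth_on_imp_C1[OF assms(1)] by blast
  have "open \<Omega>" using assms(1) by (simp add: smooth_on_def)
  obtain r1 where "r1 > 0" and strict: "\<And>w w'. w \<in> ball (p, p) r1 \<Longrightarrow> w' \<in> ball (p, p) r1 \<Longrightarrow>
      norm (\<mu> w - \<mu> w' - \<mu>' (p, p) (w - w')) \<le> \<epsilon> * norm (w - w')"
    using C1_imp_strict_derivative[OF \<open>open \<Omega>\<close> assms(2) deriv cont[OF assms(2) \<open>\<epsilon> > 0\<close>]] by blast
  have additive: "\<mu>' (p, p) (a, b) = a + b" for a b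
    using unital_has_derivative_eq_add[OF deriv[OF assms(2)] assms(3,4) unit] .
  obtain r2 where "r2 > 0" "ball p r2 \<subseteq> S"
    using assms(3,4) open_contains_ball by blast
  define r where "r = min (r1 / 2) r2"
  have in_ball: "(u, v) \<in> ball (p, p) r1" if "norm (u - p) < r" "norm (v - p) < r" for u v
    using norm_Pair_le[of "p - u" "p - v"] that
    by (simp add: dist_norm r_def norm_minus_commute)
  have "near_additive \<mu> p r \<epsilon>"
  proof
    fix u assume "norm (u - p) < r"
    then have "u \<in> S"
      using \<open>ball p r2 \<subseteq> S\<close> by (auto simp: r_def dist_norm norm_minus_commute)
    then show "\<mu> (p, u) = u" "\<mu> (u, p) = u" using unit by auto
  next
    fix u v u' v' :: 'a
    assume "norm (u - p) < r" "norm (v - p) < r" "norm (u' - p) < r" "norm (v' - p) < r"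
    then have "norm (\<mu> (u, v) - \<mu> (u', v') - \<mu>' (p, p) ((u, v) - (u', v'))) \<le> \<epsilon> * norm ((u, v) - (u', v'))"
      by (intro strict in_ball)
    then have "norm (\<mu> (u, v) - \<mu> (u', v') - ((u - u') + (v - v'))) \<le> \<epsilon> * norm (u - u', v - v')"
      by (simp add: additive)
    also have "\<dots> \<le> \<epsilon> * (norm (u - u') + norm (v - v'))"
      using \<open>\<epsilon> > 0\<close> by (simp add: norm_Pair_le)
    finally show "norm (\<mu> (u, v) - \<mu> (u', v') - ((u - u') + (v - v'))) \<le> \<epsilon> * (norm (u - u') + norm (v - v'))" .
  qed
  moreover have "r > 0" using \<open>r1 > 0\<close> \<open>r2 > 0\<close> by (simp add: r_def)
  ultimately show ?thesis by blast
qed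

section \<open>Charts and the topology of l1\<close>

lemma openin_chart_preimage_ball:
  fixes \<phi> :: "'a \<Rightarrow> 'e::real_normed_vector"
  assumes "openin T U" and hom: "homeomorphic_map (subtopology T U) (top_of_set (\<phi> ` U)) \<phi>"
  shows "openin T {q \<in> U. norm (\<phi> q - c) < r}"
proof -
  have "openin (subtopology T U) {q \<in> topspace (subtopology T U). \<phi> q \<in> \<phi> ` U \<inter> ball c r}"
    by (rule openin_continuous_map_preimage[OF homeomorphic_imp_continuous_map[OF hom]]) auto
  moreover have "{q \<in> topspace (subtopology T U). \<phi> q \<in> \<phi> ` U \<inter> ball c r} = {q \<in> U. norm (\<phi> q - c) < r}"
    using openin_subset[OF assms(1)] by (auto simp: dist_norm norm_minus_commute)
  ultimately have "openin (subtopology T U) {q \<in> U. norm (\<phi> q - c) < r}"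
    by simp
  then show ?thesis
    using openin_open_subtopology[OF assms(1)] by blast
qed

lemma open_chart_image:
  fixes \<phi> :: "'a \<Rightarrow> 'e::real_normed_vector"
  assumes "openin T U" "open (\<phi> ` U)" and hom: "homeomorphic_map (subtopology T U) (top_of_set (\<phi> ` U)) \<phi>"
    and "openin T W" "W \<subseteq> U"
  shows "open (\<phi> ` W)"
proof -
  have "openin (subtopology T U) W"
    using openin_open_subtopology[OF assms(1)] assms(4,5) by blast
  then have "openin (top_of_set (\<phi> ` U)) (\<phi> ` W)"
    using homeomorphic_map_openness_eq[OF hom] openin_subset by blast
  then show ?thesis
    using openin_open_trans[OF _ assms(2)] by blast
qed

lemma banach_lie_group_chart:
  fixes T :: "'g topology"
  assumes "banach_lie_group T m i TYPE('e::banach)" "x \<in> topspace T"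
  obtains U and \<phi> :: "'g \<Rightarrow> 'e::banach" where "openin T U" "open (\<phi> ` U)"
    "homeomorphic_map (subtopology T U) (top_of_set (\<phi> ` U)) \<phi>" "x \<in> U"
    "smooth_on {p \<in> \<phi> ` U \<times> \<phi> ` U. m (inv_into U \<phi> (fst p)) (inv_into U \<phi> (snd p)) \<in> U}
       (\<lambda>p. \<phi> (m (inv_into U \<phi> (fst p)) (inv_into U \<phi> (snd p))))"
proof -
  obtain A :: "('g set \<times> ('g \<Rightarrow> 'e)) set" where
    charts: "\<forall>(U, \<phi>)\<in>A. openin T U \<and> open (\<phi> ` U) \<and> homeomorphic_map (subtopology T U) (top_of_set (\<phi> ` U)) \<phi>"
    and cover: "topspace T \<subseteq> \<Union>(fst ` A)"
    and mult: "\<forall>(U, \<phi>)\<in>A. \<forall>(V, \<psi>)\<in>A. \<forall>(W, \<theta>)\<in>A.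
       smooth_on {p \<in> \<phi> ` U \<times> \<psi> ` V. m (inv_into U \<phi> (fst p)) (inv_into V \<psi> (snd p)) \<in> W}
         (\<lambda>p. \<theta> (m (inv_into U \<phi> (fst p)) (inv_into V \<psi> (snd p))))"
    using assms(1) unfolding banach_lie_group_def by blast
  obtain U \<phi> where UA: "(U, \<phi>) \<in> A" and "x \<in> U"
    using cover assms(2) by auto
  have "\<forall>(V, \<psi>)\<in>A. \<forall>(W, \<theta>)\<in>A.
       smooth_on {p \<in> \<phi> ` U \<times> \<psi> ` V. m (inv_into U \<phi> (fst p)) (inv_into V \<psi> (snd p)) \<in> W}
         (\<lambda>p. \<theta> (m (inv_into U \<phi> (fst p)) (inv_into V \<psi> (snd p))))"
    using bspec[OF mult UA] by simp
  from bspec[OF this UA] have "\<forall>(W, \<theta>)\<in>A.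
       smooth_on {p \<in> \<phi> ` U \<times> \<phi> ` U. m (inv_into U \<phi> (fst p)) (inv_into U \<phi> (snd p)) \<in> W}
         (\<lambda>p. \<theta> (m (inv_into U \<phi> (fst p)) (inv_into U \<phi> (snd p))))"
    by simp
  from bspec[OF this UA] have "smooth_on {p \<in> \<phi> ` U \<times> \<phi> ` U. m (inv_into U \<phi> (fst p)) (inv_into U \<phi> (snd p)) \<in> U}
       (\<lambda>p. \<phi> (m (inv_into U \<phi> (fst p)) (inv_into U \<phi> (snd p))))"
    by simp
  with bspec[OF charts UA] \<open>x \<in> U\<close> show ?thesis
    using that by (simp only: case_prod_conv) blast
qed

lemma openin_ell1_topology:
  "openin (ell1_topology d) V \<longleftrightarrow>
     V \<subseteq> ell1 d \<and> (\<forall>x\<in>V. \<exists>r>0. \<forall>y\<in>ell1 d. ell1_dist d x y < r \<longrightarrow> y \<in> V)"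
proof -
  define near where "near x V \<longleftrightarrow> (\<exists>r>0. \<forall>y\<in>ell1 d. ell1_dist d x y < r \<longrightarrow> y \<in> V)" for x V
  have near_Int: "near x (S \<inter> T)" if near: "near x S" "near x T" for x S T
  proof -
    obtain r1 r2 where "r1 > 0" "\<forall>y\<in>ell1 d. ell1_dist d x y < r1 \<longrightarrow> y \<in> S"
      and "r2 > 0" "\<forall>y\<in>ell1 d. ell1_dist d x y < r2 \<longrightarrow> y \<in> T"
      using near unfolding near_def by blast
    then show ?thesis
      unfolding near_def by (intro exI[of _ "min r1 r2"]) auto
  qed
  have near_mono: "near x T" if "near x S" "S \<subseteq> T" for x S T
    using that unfolding near_def by blast
  have "istopology (\<lambda>V. V \<subseteq> ell1 d \<and> (\<forall>x\<in>V. near x V))"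
    unfolding istopology_def
  proof (rule conjI; intro allI impI)
    fix S T :: "(nat \<Rightarrow> heis) set"
    assume "S \<subseteq> ell1 d \<and> (\<forall>x\<in>S. near x S)" "T \<subseteq> ell1 d \<and> (\<forall>x\<in>T. near x T)"
    then show "S \<inter> T \<subseteq> ell1 d \<and> (\<forall>x\<in>S \<inter> T. near x (S \<inter> T))"
      using near_Int by blast
  next
    fix K :: "(nat \<Rightarrow> heis) set set"
    assume "\<forall>S\<in>K. S \<subseteq> ell1 d \<and> (\<forall>x\<in>S. near x S)"
    then show "\<Union>K \<subseteq> ell1 d \<and> (\<forall>x\<in>\<Union>K. near x (\<Union>K))"
      using near_mono[OF _ Union_upper] by blast
  qed
  then show ?thesis
    unfolding ell1_topology_def near_def by simp
qed

lemma topspace_ell1_topology: "topspace (ell1_topology d) = ell1 d"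
proof
  show "topspace (ell1_topology d) \<subseteq> ell1 d"
    using openin_topspace[of "ell1_topology d"] by (simp only: openin_ell1_topology)
  show "ell1 d \<subseteq> topspace (ell1_topology d)"
    by (rule openin_subset) (auto simp: openin_ell1_topology intro: zero_less_one)
qed

lemma ell1_chart_continuous:
  fixes \<phi> :: "(nat \<Rightarrow> heis) \<Rightarrow> 'e::real_normed_vector"
  assumes "openin (ell1_topology d) U" "homeomorphic_map (subtopology (ell1_topology d) U) (top_of_set (\<phi> ` U)) \<phi>"
    and "x \<in> U" "r > 0"
  shows "\<exists>R>0. \<forall>q\<in>ell1 d. ell1_dist d x q < R \<longrightarrow> q \<in> U \<and> norm (\<phi> q - \<phi> x) < r"
  using openin_chart_preimage_ball[OF assms(1,2), of "\<phi> x" r] assms(3,4)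
  unfolding openin_ell1_topology by auto

section \<open>Homogeneous distances and finitely supported sequences\<close>

definition ell1_unit :: "nat \<Rightarrow> heis" where
  "ell1_unit = (\<lambda>_. heis_one)"

definition ell1_single :: "nat \<Rightarrow> heis \<Rightarrow> nat \<Rightarrow> heis" where
  "ell1_single n p = ell1_unit(n := p)"

definition ell1_block :: "nat \<Rightarrow> heis \<Rightarrow> nat \<Rightarrow> heis" where
  "ell1_block k p = (\<lambda>m. if m < k then p else heis_one)"

lemma heis_mult_one [simp]: "heis_mult p heis_one = p" "heis_mult heis_one p = p"
  by (cases p; simp add: heis_mult_def heis_one_def)+

lemma ell1_mult_single: "ell1_mult (ell1_single n p) (ell1_single n q) = ell1_single n (heis_mult p q)"
  by (auto simp: ell1_mult_def ell1_single_def ell1_unit_def)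

lemma ell1_mult_unit [simp]: "ell1_mult ell1_unit x = x" "ell1_mult x ell1_unit = x"
  by (simp_all add: ell1_mult_def ell1_unit_def)

lemma ell1_block_0: "ell1_block 0 p = ell1_unit"
  by (simp add: ell1_block_def ell1_unit_def)

lemma ell1_mult_block_single: "ell1_mult (ell1_block k p) (ell1_single k p) = ell1_block (Suc k) p"
  by (auto simp: ell1_mult_def ell1_block_def ell1_single_def ell1_unit_def)

lemma heis_mult_vertical: "heis_mult (0, a, 0) (0, b, 0) = (0, a + b, 0)"
  by (simp add: heis_mult_def)

lemma heis_commutator: "heis_mult (0, 0, a * b) (heis_mult (0, b, 0) (a, 0, 0)) = heis_mult (a, 0, 0) (0, b, 0)"
  by (simp add: heis_mult_def field_simps)

locale heis_distance =
  fixes d :: "heis \<Rightarrow> heis \<Rightarrow> real"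
  assumes homogeneous: "homogeneous_distance d"
begin

lemma d_eq_0_iff: "d p q = 0 \<longleftrightarrow> p = q"
  and d_commute: "d p q = d q p"
  and d_triangle: "d p r \<le> d p q + d q r"
  and d_left_invariant: "d (heis_mult g p) (heis_mult g q) = d p q"
  and d_dil: "d (heis_dil s p) (heis_dil s q) = \<bar>s\<bar> * d p q"
proof -
  have "(\<forall>p q. d p q = 0 \<longleftrightarrow> p = q) \<and> (\<forall>p q. d p q = d q p) \<and> (\<forall>p q r. d p r \<le> d p q + d q r) \<and>
      (\<forall>g p q. d (heis_mult g p) (heis_mult g q) = d p q) \<and> (\<forall>s p q. d (heis_dil s p) (heis_dil s q) = \<bar>s\<bar> * d p q)"
    using homogeneous unfolding homogeneous_distance_def by (elim conjE) (intro conjI; assumption)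
  then show "d p q = 0 \<longleftrightarrow> p = q" "d p q = d q p" "d p r \<le> d p q + d q r"
      "d (heis_mult g p) (heis_mult g q) = d p q" "d (heis_dil s p) (heis_dil s q) = \<bar>s\<bar> * d p q"
    by blast+
qed

lemma d_self [simp]: "d p p = 0"
  by (simp add: d_eq_0_iff)

lemma d_nonneg: "0 \<le> d p q"
  using d_triangle[of p p q] d_commute[of q p] by simp

lemma d_one_mult: "d heis_one (heis_mult p q) \<le> d heis_one p + d heis_one q"
  using d_triangle[of heis_one "heis_mult p q" p] d_left_invariant[of p heis_one q] by simp

lemma d_one_dil: "d heis_one (heis_dil s p) = \<bar>s\<bar> * d heis_one p"
  using d_dil[of s heis_one p] by (simp add: heis_dil_def heis_one_def)

lemma summable_ell1_dist:
  assumes "x \<in> ell1 d" "y \<in> ell1 d"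
  shows "summable (\<lambda>n. d (x n) (y n))"
proof (rule summable_comparison_test)
  show "\<exists>N. \<forall>n\<ge>N. norm (d (x n) (y n)) \<le> d (x n) heis_one + d (y n) heis_one"
  proof (intro exI[of _ 0] allI impI)
    fix n
    show "norm (d (x n) (y n)) \<le> d (x n) heis_one + d (y n) heis_one"
      using d_triangle[of "x n" "y n" heis_one] d_commute[of heis_one "y n"] d_nonneg[of "x n" "y n"]
      by simp
  qed
  show "summable (\<lambda>n. d (x n) heis_one + d (y n) heis_one)"
    using assms unfolding ell1_def by (simp add: summable_add)
qed

lemma ell1_dist_triangle:
  assumes "x \<in> ell1 d" "y \<in> ell1 d" "z \<in> ell1 d"
  shows "ell1_dist d x z \<le> ell1_dist d x y + ell1_dist d y z"
proof -
  have "ell1_dist d x z \<le> (\<Sum>n. d (x n) (y n) + d (y n) (z n))"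
    unfolding ell1_dist_def
    by (intro suminf_le d_triangle summable_ell1_dist summable_add assms)
  also have "\<dots> = ell1_dist d x y + ell1_dist d y z"
    unfolding ell1_dist_def by (intro suminf_add[symmetric] summable_ell1_dist assms)
  finally show ?thesis .
qed

lemma ell1_finite_support:
  assumes "\<And>k. K \<le> k \<Longrightarrow> x k = heis_one"
  shows "x \<in> ell1 d" and "ell1_dist d ell1_unit x = (\<Sum>k<K. d heis_one (x k))"
proof -
  have "(\<lambda>k. d (x k) heis_one) sums (\<Sum>k<K. d (x k) heis_one)"
    by (rule sums_finite) (use assms in auto)
  then show "x \<in> ell1 d"
    unfolding ell1_def by (auto simp: sums_iff)
  have "(\<lambda>k. d heis_one (x k)) sums (\<Sum>k<K. d heis_one (x k))"
    by (rule sums_finite) (use assms in auto)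
  then show "ell1_dist d ell1_unit x = (\<Sum>k<K. d heis_one (x k))"
    unfolding ell1_dist_def ell1_unit_def by (simp add: sums_iff)
qed

lemma ell1_unit_in_ell1: "ell1_unit \<in> ell1 d"
  by (rule ell1_finite_support(1)[of 0]) (simp add: ell1_unit_def)

lemma ell1_single_in_ell1: "ell1_single n p \<in> ell1 d"
  and ell1_dist_unit_single: "ell1_dist d ell1_unit (ell1_single n p) = d heis_one p"
proof -
  have "ell1_single n p k = heis_one" if "Suc n \<le> k" for k
    using that by (simp add: ell1_single_def ell1_unit_def)
  from ell1_finite_support[where x = "ell1_single n p", OF this]
  show "ell1_single n p \<in> ell1 d" "ell1_dist d ell1_unit (ell1_single n p) = d heis_one p"
    by (simp_all add: ell1_single_def ell1_unit_def)
qed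

lemma ell1_block_in_ell1: "ell1_block k p \<in> ell1 d"
  and ell1_dist_unit_block: "ell1_dist d ell1_unit (ell1_block k p) = real k * d heis_one p"
proof -
  have "ell1_block k p m = heis_one" if "k \<le> m" for m
    using that by (simp add: ell1_block_def)
  from ell1_finite_support[where x = "ell1_block k p", OF this]
  show "ell1_block k p \<in> ell1 d" "ell1_dist d ell1_unit (ell1_block k p) = real k * d heis_one p"
    by (simp_all add: ell1_block_def)
qed

lemma openin_ell1_ball:
  assumes "x \<in> ell1 d"
  shows "openin (ell1_topology d) {q \<in> ell1 d. ell1_dist d x q < \<rho>}"
  unfolding openin_ell1_topology
proof (intro conjI ballI)
  fix q assume q: "q \<in> {q \<in> ell1 d. ell1_dist d x q < \<rho>}"
  show "\<exists>r>0. \<forall>y\<in>ell1 d. ell1_dist d q y < r \<longrightarrow> y \<in> {q \<in> ell1 d. ell1_dist d x q < \<rho>}"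
    using q ell1_dist_triangle[OF assms, of q] by (intro exI[of _ "\<rho> - ell1_dist d x q"]) force
qed auto

lemma ell1_chart_inverse_continuous:
  fixes \<phi> :: "(nat \<Rightarrow> heis) \<Rightarrow> 'e::real_normed_vector"
  assumes U: "openin (ell1_topology d) U" "open (\<phi> ` U)"
    and hom: "homeomorphic_map (subtopology (ell1_topology d) U) (top_of_set (\<phi> ` U)) \<phi>"
    and "x \<in> U" "\<rho> > 0"
  shows "\<exists>\<eta>>0. \<forall>q\<in>U. norm (\<phi> q - \<phi> x) < \<eta> \<longrightarrow> ell1_dist d x q < \<rho>"
proof -
  have "U \<subseteq> ell1 d"
    using openin_subset[OF U(1)] by (simp add: topspace_ell1_topology)
  define W where "W = U \<inter> {q \<in> ell1 d. ell1_dist d x q < \<rho>}"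
  have "open (\<phi> ` W)"
    using open_chart_image[OF U hom] openin_Int[OF U(1) openin_ell1_ball] \<open>x \<in> U\<close> \<open>U \<subseteq> ell1 d\<close>
    unfolding W_def by blast
  moreover have "x \<in> W"
    using \<open>x \<in> U\<close> \<open>U \<subseteq> ell1 d\<close> \<open>\<rho> > 0\<close> by (auto simp: W_def ell1_dist_def)
  then have "\<phi> x \<in> \<phi> ` W" by (rule imageI)
  ultimately obtain \<eta> where "\<eta> > 0" and \<eta>: "ball (\<phi> x) \<eta> \<subseteq> \<phi> ` W"
    using open_contains_ball by blast
  have "inj_on \<phi> U"
    using homeomorphic_imp_injective_map[OF hom] openin_subset[OF U(1)] by (simp add: Int_absorb1)
  then have "ell1_dist d x q < \<rho>" if "q \<in> U" "norm (\<phi> q - \<phi> x) < \<eta>" for q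
    using \<eta> that unfolding W_def by (auto simp: dist_norm norm_minus_commute inj_on_eq_iff)
  with \<open>\<eta> > 0\<close> show ?thesis by blast
qed

end

section \<open>No chart at the unit has a continuous inverse\<close>

lemma divide_pow2_le: "0 \<le> (x::real) \<Longrightarrow> x / 2 ^ n \<le> x"
  using mult_left_mono[OF one_le_power[of "2::real" n], of x] by (simp add: divide_le_eq)

locale ell1_chart = heis_distance d + near_additive \<mu> "\<phi> ell1_unit" r "1/8"
  for d and \<mu> :: "'e::real_normed_vector \<times> 'e \<Rightarrow> 'e" and \<phi> :: "(nat \<Rightarrow> heis) \<Rightarrow> 'e" and r +
  fixes U :: "(nat \<Rightarrow> heis) set" and R :: real
  assumes R_pos: "R > 0"
    and small_in_chart: "\<lbrakk>q \<in> ell1 d; ell1_dist d ell1_unit q < R\<rbrakk> \<Longrightarrow> q \<in> U \<and> norm (\<phi> q - \<phi> ell1_unit) < r"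
    and chart_mult: "\<lbrakk>a \<in> U; b \<in> U\<rbrakk> \<Longrightarrow> \<mu> (\<phi> a, \<phi> b) = \<phi> (ell1_mult a b)"
begin

lemma single_in_chart:
  "d heis_one p < R \<Longrightarrow> ell1_single n p \<in> U \<and> norm (\<phi> (ell1_single n p) - \<phi> ell1_unit) < r"
  using small_in_chart[OF ell1_single_in_ell1] by (simp add: ell1_dist_unit_single)

lemma chart_single_square:
  assumes "d heis_one p < R"
  shows "norm (\<phi> (ell1_single n p) - \<phi> ell1_unit) \<le> 4/7 * norm (\<phi> (ell1_single n (heis_mult p p)) - \<phi> ell1_unit)"
proof -
  let ?u = "\<phi> (ell1_single n p)"
  have "\<mu> (?u, ?u) = \<phi> (ell1_single n (heis_mult p p))"
    using chart_mult single_in_chart[OF assms] by (simp add: ell1_mult_single)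
  then show ?thesis
    using square_bound[of ?u] single_in_chart[OF assms] by simp
qed

lemma chart_vertical_halving:
  assumes "d heis_one (0, b, 0) < R"
  shows "norm (\<phi> (ell1_single n (0, b / 2 ^ i, 0)) - \<phi> ell1_unit) \<le> (4/7) ^ i * r"
proof (induction i)
  case 0
  then show ?case using single_in_chart[OF assms] by (simp add: less_imp_le)
next
  case (Suc i)
  have "(0, b / 2 ^ Suc i, 0) = heis_dil (1 / 2 ^ Suc i) (0, b, 0)"
    by (simp add: heis_dil_def)
  then have "d heis_one (0, b / 2 ^ Suc i, 0) = d heis_one (0, b, 0) / 2 ^ Suc i"
    by (simp add: d_one_dil)
  also have "\<dots> \<le> d heis_one (0, b, 0)"
    using d_nonneg by (rule divide_pow2_le)
  finally have "d heis_one (0, b / 2 ^ Suc i, 0) < R"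
    using assms by simp
  then have "norm (\<phi> (ell1_single n (0, b / 2 ^ Suc i, 0)) - \<phi> ell1_unit)
      \<le> 4/7 * norm (\<phi> (ell1_single n (0, b / 2 ^ i, 0)) - \<phi> ell1_unit)"
    using chart_single_square[of "(0, b / 2 ^ Suc i, 0)" n] by (simp add: heis_mult_vertical)
  also have "\<dots> \<le> (4/7) ^ Suc i * r"
    using Suc.IH by simp
  finally show ?case .
qed

lemma chart_commutator:
  assumes "d heis_one (a, 0, 0) + d heis_one (0, b, 0) < R" "d heis_one (0, 0, a * b) < R"
  shows "norm (\<phi> (ell1_single n (0, 0, a * b)) - \<phi> ell1_unit) \<le> norm (\<phi> (ell1_single n (0, b, 0)) - \<phi> ell1_unit)"
proof -
  let ?x = "ell1_single n (a, 0, 0)" and ?y = "ell1_single n (0, b, 0)" and ?z = "ell1_single n (0, 0, a * b)"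
  let ?yx = "ell1_single n (heis_mult (0, b, 0) (a, 0, 0))"
  have "d heis_one (a, 0, 0) < R" "d heis_one (0, b, 0) < R"
    using assms(1) d_nonneg[of heis_one] by (smt (verit))+
  note small = single_in_chart[OF this(1)] single_in_chart[OF this(2)] single_in_chart[OF assms(2)]
    single_in_chart[OF le_less_trans[OF d_one_mult assms(1)[unfolded add.commute[of "d heis_one (a, 0, 0)"]]]]
  have yx: "\<mu> (\<phi> ?y, \<phi> ?x) = \<phi> ?yx"
    using small by (simp add: chart_mult ell1_mult_single)
  have comm: "\<mu> (\<phi> ?z, \<mu> (\<phi> ?y, \<phi> ?x)) = \<mu> (\<phi> ?x, \<phi> ?y)"
    using small by (simp add: yx chart_mult ell1_mult_single heis_commutator)
  have "(1 - 1/8) * norm (\<phi> ?z - \<phi> ell1_unit) \<le> 2 * (1/8) * norm (\<phi> ?y - \<phi> ell1_unit)"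
    by (rule commutator_bound[of "\<phi> ?x" "\<phi> ?y" "\<phi> ?z"]) (use small yx comm in simp_all)
  then have "7 * norm (\<phi> ?z - \<phi> ell1_unit) \<le> 2 * norm (\<phi> ?y - \<phi> ell1_unit)"
    by simp
  then show ?thesis
    using norm_ge_zero[of "\<phi> ?y - \<phi> ell1_unit"] by linarith
qed

lemma chart_block:
  assumes "real k * d heis_one g < R" "\<And>m. m < k \<Longrightarrow> norm (\<phi> (ell1_single m g) - \<phi> ell1_unit) \<le> c"
  shows "norm (\<phi> (ell1_block k g) - \<phi> ell1_unit) \<le> real k * (9/8 * c)"
  using assms
proof (induction k)
  case 0
  then show ?case by (simp add: ell1_block_0)
next
  case (Suc k)
  have "real k * d heis_one g \<le> real (Suc k) * d heis_one g" "d heis_one g \<le> real (Suc k) * d heis_one g"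
    using d_nonneg[of heis_one g] by (simp_all add: distrib_right)
  then have block: "ell1_block k g \<in> U \<and> norm (\<phi> (ell1_block k g) - \<phi> ell1_unit) < r"
    and single: "ell1_single k g \<in> U \<and> norm (\<phi> (ell1_single k g) - \<phi> ell1_unit) < r"
    using small_in_chart[OF ell1_block_in_ell1] single_in_chart Suc.prems(1)
    by (simp_all add: ell1_dist_unit_block)
  have "\<phi> (ell1_block (Suc k) g) = \<mu> (\<phi> (ell1_block k g), \<phi> (ell1_single k g))"
    using block single by (simp add: chart_mult ell1_mult_block_single)
  then have "norm (\<phi> (ell1_block (Suc k) g) - \<phi> ell1_unit)
      \<le> norm (\<phi> (ell1_block k g) - \<phi> ell1_unit) + 9/8 * norm (\<phi> (ell1_single k g) - \<phi> ell1_unit)"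
    using product_bound block single by simp
  also have "\<dots> \<le> real k * (9/8 * c) + 9/8 * c"
  proof (intro add_mono)
    show "norm (\<phi> (ell1_block k g) - \<phi> ell1_unit) \<le> real k * (9/8 * c)"
      using Suc.prems \<open>real k * d heis_one g \<le> real (Suc k) * d heis_one g\<close> by (intro Suc.IH) auto
    show "9/8 * norm (\<phi> (ell1_single k g) - \<phi> ell1_unit) \<le> 9/8 * c"
      using Suc.prems(2) by simp
  qed
  finally show ?case by (simp add: algebra_simps)
qed

lemma chart_central_bound:
  assumes "\<delta> \<ge> 0" and small: "\<delta> * (d heis_one (1, 0, 0) + d heis_one (0, 1, 0) + d heis_one (0, 0, 1)) < R"
  shows "norm (\<phi> (ell1_single m (0, 0, \<delta> * (\<delta> / 2 ^ (2 * j)))) - \<phi> ell1_unit) \<le> (4/7) ^ (2 * j) * r"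
proof -
  let ?b = "\<delta> / 2 ^ (2 * j)"
  have "(\<delta>, 0, 0) = heis_dil \<delta> (1, 0, 0)" "(0, \<delta>, 0) = heis_dil \<delta> (0, 1, 0)"
    "(0, ?b, 0) = heis_dil ?b (0, 1, 0)" "(0, 0, \<delta> * ?b) = heis_dil (\<delta> / 2 ^ j) (0, 0, 1)"
    by (simp_all add: heis_dil_def power2_eq_square mult_2 power_add)
  then have "d heis_one (\<delta>, 0, 0) = \<delta> * d heis_one (1, 0, 0)"
    "d heis_one (0, \<delta>, 0) = \<delta> * d heis_one (0, 1, 0)"
    "d heis_one (0, ?b, 0) = ?b * d heis_one (0, 1, 0)"
    "d heis_one (0, 0, \<delta> * ?b) = \<delta> / 2 ^ j * d heis_one (0, 0, 1)"
    using assms(1) by (simp_all only: d_one_dil) simp_all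
  moreover have "?b * d heis_one (0, 1, 0) \<le> \<delta> * d heis_one (0, 1, 0)"
    "\<delta> / 2 ^ j * d heis_one (0, 0, 1) \<le> \<delta> * d heis_one (0, 0, 1)"
    by (rule mult_right_mono[OF divide_pow2_le[OF assms(1)] d_nonneg])+
  moreover have "0 \<le> \<delta> * d heis_one (1, 0, 0)" "0 \<le> \<delta> * d heis_one (0, 1, 0)" "0 \<le> \<delta> * d heis_one (0, 0, 1)"
    using assms(1) d_nonneg by simp_all
  ultimately have "d heis_one (\<delta>, 0, 0) + d heis_one (0, ?b, 0) < R" "d heis_one (0, 0, \<delta> * ?b) < R"
    "d heis_one (0, \<delta>, 0) < R"
    using small unfolding distrib_left by linarith+
  then show ?thesis
    using chart_commutator[of \<delta> ?b m] chart_vertical_halving[of \<delta> m "2 * j"] by linarith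
qed

lemma chart_central_block:
  fixes j :: nat
  assumes "\<delta> > 0" and small: "\<delta> * (d heis_one (1, 0, 0) + d heis_one (0, 1, 0) + d heis_one (0, 0, 1)) < R"
  defines "q \<equiv> ell1_block (2 ^ j) (0, 0, \<delta> * (\<delta> / 2 ^ (2 * j)))"
  shows "q \<in> U" "ell1_dist d ell1_unit q = \<delta> * d heis_one (0, 0, 1)"
    "norm (\<phi> q - \<phi> ell1_unit) \<le> 9/8 * ((32/49) ^ j * r)"
proof -
  let ?g = "(0::real, 0::real, \<delta> * (\<delta> / 2 ^ (2 * j)))"
  have "?g = heis_dil (\<delta> / 2 ^ j) (0, 0, 1)"
    by (simp add: heis_dil_def power2_eq_square mult_2 power_add)
  then show dist: "ell1_dist d ell1_unit q = \<delta> * d heis_one (0, 0, 1)"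
    using \<open>\<delta> > 0\<close> by (simp add: q_def ell1_dist_unit_block d_one_dil)
  have "\<delta> * d heis_one (0, 0, 1) < R"
    using small \<open>\<delta> > 0\<close> d_nonneg[of heis_one] by (smt (verit) distrib_left mult_nonneg_nonneg)
  then show "q \<in> U"
    using small_in_chart[OF ell1_block_in_ell1] dist by (simp add: q_def)
  have "norm (\<phi> q - \<phi> ell1_unit) \<le> real (2 ^ j) * (9/8 * ((4/7) ^ (2 * j) * r))"
    unfolding q_def
  proof (rule chart_block)
    show "real (2 ^ j) * d heis_one ?g < R"
      using dist \<open>\<delta> * d heis_one (0, 0, 1) < R\<close> by (simp add: q_def ell1_dist_unit_block)
    show "norm (\<phi> (ell1_single m ?g) - \<phi> ell1_unit) \<le> (4/7) ^ (2 * j) * r" for m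
      using chart_central_bound \<open>\<delta> > 0\<close> small by simp
  qed
  also have "\<dots> = 9/8 * ((2 * (4/7) ^ 2) ^ j * r)"
    by (simp only: power_mult power_mult_distrib of_nat_power) simp
  also have "\<dots> = 9/8 * ((32/49) ^ j * r)"
    by (simp add: power2_eq_square)
  finally show "norm (\<phi> q - \<phi> ell1_unit) \<le> 9/8 * ((32/49) ^ j * r)" .
qed

lemma chart_inverse_discontinuous:
  "\<exists>\<rho>>0. \<forall>\<eta>>0. \<exists>q\<in>U. norm (\<phi> q - \<phi> ell1_unit) < \<eta> \<and> ell1_dist d ell1_unit q = \<rho>"
proof -
  define c where "c = d heis_one (1, 0, 0) + d heis_one (0, 1, 0) + d heis_one (0, 0, 1)"
  have "d heis_one (0, 0, 1) > 0"
    using d_eq_0_iff[of heis_one "(0, 0, 1)"] d_nonneg[of heis_one "(0, 0, 1)"]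
    by (auto simp: heis_one_def)
  then have "c > 0"
    using d_nonneg by (simp add: c_def add_nonneg_pos)
  define \<delta> where "\<delta> = R / (2 * c)"
  have "\<delta> > 0" "\<delta> * c < R"
    using R_pos \<open>c > 0\<close> by (simp_all add: \<delta>_def field_simps)
  have "r > 0"
    using single_in_chart[of heis_one 0] R_pos radius_pos[of "\<phi> (ell1_single 0 heis_one)"] by simp
  have "\<exists>q\<in>U. norm (\<phi> q - \<phi> ell1_unit) < \<eta> \<and> ell1_dist d ell1_unit q = \<delta> * d heis_one (0, 0, 1)"
    if "\<eta> > 0" for \<eta>
  proof -
    obtain j where "(32/49) ^ j < \<eta> / (2 * r)"
      using real_arch_pow_inv[of "\<eta> / (2 * r)" "32/49"] \<open>\<eta> > 0\<close> \<open>r > 0\<close> by auto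
    then have "(32/49) ^ j * r < \<eta> / 2"
      using \<open>r > 0\<close> by (simp add: less_divide_eq field_simps)
    then have "9/8 * ((32/49) ^ j * r) < \<eta>"
      using \<open>\<eta> > 0\<close> by linarith
    with chart_central_block[OF \<open>\<delta> > 0\<close>, of j] \<open>\<delta> * c < R\<close> show ?thesis
      unfolding c_def by (meson le_less_trans)
  qed
  then show ?thesis
    using \<open>\<delta> > 0\<close> \<open>d heis_one (0, 0, 1) > 0\<close> by (intro exI[of _ "\<delta> * d heis_one (0, 0, 1)"]) auto
qed

end

lemma (in heis_distance) banach_lie_group_imp_ell1_chart:
  assumes "banach_lie_group (ell1_topology d) ell1_mult ell1_inv TYPE('e::banach)"
  obtains \<mu> and \<phi> :: "(nat \<Rightarrow> heis) \<Rightarrow> 'e::banach" and r U R where "ell1_chart d \<mu> \<phi> r U R"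
    "openin (ell1_topology d) U" "open (\<phi> ` U)" "ell1_unit \<in> U"
    "homeomorphic_map (subtopology (ell1_topology d) U) (top_of_set (\<phi> ` U)) \<phi>"
proof -
  have "ell1_unit \<in> topspace (ell1_topology d)"
    by (simp add: topspace_ell1_topology ell1_unit_in_ell1)
  with assms obtain U and \<phi> :: "(nat \<Rightarrow> heis) \<Rightarrow> 'e" where U: "openin (ell1_topology d) U" "open (\<phi> ` U)"
    and hom: "homeomorphic_map (subtopology (ell1_topology d) U) (top_of_set (\<phi> ` U)) \<phi>"
    and "ell1_unit \<in> U"
    and smooth: "smooth_on {p \<in> \<phi> ` U \<times> \<phi> ` U. ell1_mult (inv_into U \<phi> (fst p)) (inv_into U \<phi> (snd p)) \<in> U}
       (\<lambda>p. \<phi> (ell1_mult (inv_into U \<phi> (fst p)) (inv_into U \<phi> (snd p))))"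
    by (rule banach_lie_group_chart)
  define \<mu> where "\<mu> p = \<phi> (ell1_mult (inv_into U \<phi> (fst p)) (inv_into U \<phi> (snd p)))" for p
  have "inj_on \<phi> U"
    using homeomorphic_imp_injective_map[OF hom] openin_subset[OF U(1)] by (simp add: Int_absorb1)
  then have chart_mult: "\<mu> (\<phi> a, \<phi> b) = \<phi> (ell1_mult a b)" if "a \<in> U" "b \<in> U" for a b
    using that by (simp add: \<mu>_def)
  have "\<exists>r>0. near_additive \<mu> (\<phi> ell1_unit) r (1/8)"
  proof (rule smooth_unital_imp_near_additive[OF smooth[folded \<mu>_def] _ U(2)])
    show "(\<phi> ell1_unit, \<phi> ell1_unit) \<in> {p \<in> \<phi> ` U \<times> \<phi> ` U. ell1_mult (inv_into U \<phi> (fst p)) (inv_into U \<phi> (snd p)) \<in> U}"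
      using \<open>ell1_unit \<in> U\<close> \<open>inj_on \<phi> U\<close> by simp
    show "\<mu> (u, \<phi> ell1_unit) = u" "\<mu> (\<phi> ell1_unit, u) = u" if "u \<in> \<phi> ` U" for u
      using that chart_mult \<open>ell1_unit \<in> U\<close> by auto
  qed (use \<open>ell1_unit \<in> U\<close> in auto)
  then obtain r where "r > 0" and near: "near_additive \<mu> (\<phi> ell1_unit) r (1/8)"
    by blast
  obtain R where "R > 0" and small:
    "\<forall>q\<in>ell1 d. ell1_dist d ell1_unit q < R \<longrightarrow> q \<in> U \<and> norm (\<phi> q - \<phi> ell1_unit) < r"
    using ell1_chart_continuous[OF U(1) hom \<open>ell1_unit \<in> U\<close> \<open>r > 0\<close>] by blast
  have "ell1_chart d \<mu> \<phi> r U R"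
    by (intro ell1_chart.intro heis_distance_axioms near ell1_chart_axioms.intro \<open>R > 0\<close> chart_mult)
      (use small in auto)
  with U hom \<open>ell1_unit \<in> U\<close> show ?thesis
    using that by blast
qed

theorem mainTheorem19:
  fixes d :: "heis \<Rightarrow> heis \<Rightarrow> real"
  assumes "homogeneous_distance d"
  shows "\<not> banach_lie_group (ell1_topology d) ell1_mult ell1_inv TYPE('e::banach)"
proof
  interpret heis_distance d using assms by (rule heis_distance.intro)
  assume "banach_lie_group (ell1_topology d) ell1_mult ell1_inv TYPE('e)"
  then obtain \<mu> and \<phi> :: "(nat \<Rightarrow> heis) \<Rightarrow> 'e" and r U R where chart: "ell1_chart d \<mu> \<phi> r U R"
    and U: "openin (ell1_topology d) U" "open (\<phi> ` U)" "ell1_unit \<in> U"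
    and hom: "homeomorphic_map (subtopology (ell1_topology d) U) (top_of_set (\<phi> ` U)) \<phi>"
    by (rule banach_lie_group_imp_ell1_chart)
  obtain \<rho> where "\<rho> > 0" and discontinuous:
    "\<forall>\<eta>>0. \<exists>q\<in>U. norm (\<phi> q - \<phi> ell1_unit) < \<eta> \<and> ell1_dist d ell1_unit q = \<rho>"
    using ell1_chart.chart_inverse_discontinuous[OF chart] by blast
  obtain \<eta> where "\<eta> > 0" and "\<forall>q\<in>U. norm (\<phi> q - \<phi> ell1_unit) < \<eta> \<longrightarrow> ell1_dist d ell1_unit q < \<rho>"
    using ell1_chart_inverse_continuous[OF U(1,2) hom U(3) \<open>\<rho> > 0\<close>] by blast
  with discontinuous show False
    by fastforce
qed

end
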